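(* Let $H$ be a connected graph of order $m\ge 3$. (a) If $\textnormal{diam}(H)=1$, then $O_{\rm SR}(K_1\odot H)=\mathcal{B}$. (b) If $\textnormal{diam}(H)=2$, then $O_{\rm SR}(K_1\odot H)\in\{\mathcal{M},\mathcal{N},\mathcal{B}\}$. (c) If $\textnormal{diam}(H)=3$, then $O_{\rm SR}(K_1\odot H)\in\{\mathcal{N},\mathcal{B}\}$. (d) If $\textnormal{diam}(H)\ge 4$, then $O_{\rm SR}(K_1\odot H)=\mathcal{B}$.
   Context: All graphs are finite, simple and undirected; $\textnormal{diam}$ denotes diameter. $K_1\odot H$ (the corona product of $K_1$ with $H$) is the graph obtained from $H$ by adding one new vertex adjacent to every vertex of $H$. A set $S\subseteq V(X)$ is a strong resolving set of a connected graph $X$ if for all distinct $x,y\in V(X)$ there exists $z\in S$ such that $x$ lies on a $y$–$z$ geodesic or $y$ lies on an $x$–$z$ geodesic. The Maker–Breaker strong resolving game on $X$: Maker and Breaker alternately select a not-yet-chosen vertex of $X$; Maker wins if the vertices he selects contain a strong resolving set of $X$, Breaker wins otherwise. In the M-game Maker moves first, in the B-game Breaker moves first. $O_{\rm SR}(X)=\mathcal{M}$ if Maker has a winning strategy in both games, $\mathcal{B}$ if Breaker has a winning strategy in both, and $\mathcal{N}$ if the first player has a winning strategy in each. *)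

theory Defs
  imports Main
begin

definition simple_graph :: "'a set \<Rightarrow> ('a \<Rightarrow> 'a \<Rightarrow> bool) \<Rightarrow> bool" where
  "simple_graph V E \<longleftrightarrow> finite V \<and>
     (\<forall>x y. E x y \<longrightarrow> x \<in> V \<and> y \<in> V \<and> x \<noteq> y \<and> E y x)"

fun walk :: "('a \<Rightarrow> 'a \<Rightarrow> bool) \<Rightarrow> 'a \<Rightarrow> 'a \<Rightarrow> nat \<Rightarrow> bool" where
  "walk E x y 0 \<longleftrightarrow> x = y"
| "walk E x y (Suc n) \<longleftrightarrow> (\<exists>z. E x z \<and> walk E z y n)"

definition connected_graph :: "'a set \<Rightarrow> ('a \<Rightarrow> 'a \<Rightarrow> bool) \<Rightarrow> bool" where
  "connected_graph V E \<longleftrightarrow> simple_graph V E \<and> V \<noteq> {} \<and>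
     (\<forall>x\<in>V. \<forall>y\<in>V. \<exists>n. walk E x y n)"

definition gdist :: "('a \<Rightarrow> 'a \<Rightarrow> bool) \<Rightarrow> 'a \<Rightarrow> 'a \<Rightarrow> nat" where
  "gdist E x y = (LEAST n. walk E x y n)"

definition diam :: "'a set \<Rightarrow> ('a \<Rightarrow> 'a \<Rightarrow> bool) \<Rightarrow> nat" where
  "diam V E = Max {gdist E x y | x y. x \<in> V \<and> y \<in> V}"

definition on_geodesic :: "('a \<Rightarrow> 'a \<Rightarrow> bool) \<Rightarrow> 'a \<Rightarrow> 'a \<Rightarrow> 'a \<Rightarrow> bool" where
  "on_geodesic E y x z \<longleftrightarrow> gdist E y x + gdist E x z = gdist E y z"

definition strong_resolving :: "'a set \<Rightarrow> ('a \<Rightarrow> 'a \<Rightarrow> bool) \<Rightarrow> 'a set \<Rightarrow> bool" where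
  "strong_resolving V E S \<longleftrightarrow> S \<subseteq> V \<and>
     (\<forall>x\<in>V. \<forall>y\<in>V. x \<noteq> y \<longrightarrow>
        (\<exists>z\<in>S. on_geodesic E y x z \<or> on_geodesic E x y z))"

text \<open>Maker-Breaker game on a finite board V with Maker's winning family given by
  the predicate W (on Maker's set).  mb_maker_wins V W Ms Bs t: from the position
  where Maker has chosen Ms, Breaker has chosen Bs, and it is Maker's turn iff t,
  Maker has a winning strategy.  The game is played until all vertices are chosen.\<close>
inductive mb_maker_wins :: "'a set \<Rightarrow> ('a set \<Rightarrow> bool) \<Rightarrow> 'a set \<Rightarrow> 'a set \<Rightarrow> bool \<Rightarrow> bool"
  for V W where
  finish: "V - Ms - Bs = {} \<Longrightarrow> W Ms \<Longrightarrow> mb_maker_wins V W Ms Bs t"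
| maker_move: "x \<in> V - Ms - Bs \<Longrightarrow> mb_maker_wins V W (insert x Ms) Bs False
      \<Longrightarrow> mb_maker_wins V W Ms Bs True"
| breaker_move: "V - Ms - Bs \<noteq> {} \<Longrightarrow>
      (\<forall>x\<in>V - Ms - Bs. mb_maker_wins V W Ms (insert x Bs) True)
      \<Longrightarrow> mb_maker_wins V W Ms Bs False"

definition sr_win :: "'a set \<Rightarrow> ('a \<Rightarrow> 'a \<Rightarrow> bool) \<Rightarrow> 'a set \<Rightarrow> bool" where
  "sr_win V E Ms \<longleftrightarrow> (\<exists>S\<subseteq>Ms. strong_resolving V E S)"

datatype outcome = Out_M | Out_B | Out_N | Out_P

text \<open>Outcome: M-game = Maker first, B-game = Breaker first. Breaker wins iff Maker
  has no winning strategy (finite games are determined).  Out_P (second player wins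
  both) is listed only for totality of the definition.\<close>
definition O_SR :: "'a set \<Rightarrow> ('a \<Rightarrow> 'a \<Rightarrow> bool) \<Rightarrow> outcome" where
  "O_SR V E =
    (let mg = mb_maker_wins V (sr_win V E) {} {} True;
         bg = mb_maker_wins V (sr_win V E) {} {} False
     in if mg \<and> bg then Out_M
        else if \<not> mg \<and> \<not> bg then Out_B
        else if mg \<and> \<not> bg then Out_N
        else Out_P)"

text \<open>Corona K1 \<odot> H: new vertex None adjacent to all Some v, v \<in> V.\<close>
definition corona_V :: "'a set \<Rightarrow> 'a option set" where
  "corona_V V = insert None (Some ` V)"

fun corona_E :: "'a set \<Rightarrow> ('a \<Rightarrow> 'a \<Rightarrow> bool) \<Rightarrow> 'a option \<Rightarrow> 'a option \<Rightarrow> bool" where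
  "corona_E V E (Some u) (Some v) = E u v"
| "corona_E V E None (Some v) = (v \<in> V)"
| "corona_E V E (Some u) None = (u \<in> V)"
| "corona_E V E None None = False"

end

(* In a connected graph, if no two vertices are farther apart than x and y, then every strong
   resolving set contains x or y: a vertex z with x on a y-z geodesic is farther from y than x is,
   unless z = x.  In K1 \<odot> H all distances are at most 2, so this applies to every pair of
   non-adjacent vertices of H, and to every pair of vertices when H is complete.  Breaker wins
   as soon as, with Breaker to move, some free vertex a forms such pairs with two free vertices
   b and c: he claims a, and Maker can block only one of b and c.  If diam H \<ge> 3, a vertex x
   of a diametral path together with the path vertices at distance 2 and 3 from x is such a fork
   at the start of the B-game; if diam H \<ge> 4 or H is complete, a fork survives any first move
   of Maker.  Finally an extra vertex never hurts Maker, so if Maker wins the B-game he also wins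
   the M-game, which rules out the outcome Out_P. *)

theory Submission
  imports Defs
begin

section \<open>Maker-Breaker games\<close>

definition transversal :: "('a set \<Rightarrow> bool) \<Rightarrow> 'a set \<Rightarrow> bool" where
  "transversal W A \<longleftrightarrow> (\<forall>M. W M \<longrightarrow> M \<inter> A \<noteq> {})"

text \<open>Breaker claims \<open>a\<close> and then completes whichever of the pairs \<open>{a, b}\<close>, \<open>{a, c}\<close>
  Maker leaves open.\<close>
definition fork :: "('a set \<Rightarrow> bool) \<Rightarrow> 'a set \<Rightarrow> 'a \<Rightarrow> 'a \<Rightarrow> 'a \<Rightarrow> bool" where
  "fork W F a b c \<longleftrightarrow> {a, b, c} \<subseteq> F \<and> distinct [a, b, c] \<and>
     transversal W {a, b} \<and> transversal W {a, c}"

lemma maker_loses_if_breaker_holds_transversal: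
  assumes "transversal W A" "A \<subseteq> Bs" "A \<inter> Ms = {}"
  shows "\<not> mb_maker_wins V W Ms Bs t"
proof
  assume "mb_maker_wins V W Ms Bs t"
  then show False
    using assms by (induction rule: mb_maker_wins.induct) (auto simp: transversal_def)
qed

lemma maker_loses_if_breaker_completes_transversal:
  assumes "transversal W {a, b}" "a \<in> Bs" "a \<notin> Ms" "b \<in> V - Ms - Bs"
  shows "\<not> mb_maker_wins V W Ms Bs False"
proof
  assume "mb_maker_wins V W Ms Bs False"
  then show False
  proof cases
    case breaker_move
    then have "mb_maker_wins V W Ms (insert b Bs) True" using assms(4) by blast
    moreover have "\<not> mb_maker_wins V W Ms (insert b Bs) True"
      by (rule maker_loses_if_breaker_holds_transversal) (use assms in auto)
    ultimately show False by contradiction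
  qed (use assms(4) in blast)+
qed

lemma maker_loses_against_two_threats:
  assumes "transversal W {a, b}" "transversal W {a, c}" "a \<in> Bs" "a \<notin> Ms"
    and "b \<in> V - Ms - Bs" "c \<in> V - Ms - Bs" "b \<noteq> c"
  shows "\<not> mb_maker_wins V W Ms Bs True"
proof
  assume "mb_maker_wins V W Ms Bs True"
  then show False
  proof cases
    case (maker_move x)
    have "a \<notin> insert x Ms" using maker_move(1) assms(3,4) by blast
    show False
    proof (cases "x = b")
      case True
      then have "c \<in> V - insert x Ms - Bs" using assms(6,7) by blast
      then show False using maker_move(2) assms(2,3) \<open>a \<notin> insert x Ms\<close>
          maker_loses_if_breaker_completes_transversal by metis
    next
      case False
      then have "b \<in> V - insert x Ms - Bs" using assms(5) by blast
      then show False using maker_move(2) assms(1,3) \<open>a \<notin> insert x Ms\<close>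
          maker_loses_if_breaker_completes_transversal by metis
    qed
  qed (use assms(5) in blast)+
qed

lemma maker_loses_if_breaker_to_move_has_fork:
  assumes "fork W (V - Ms - Bs) a b c"
  shows "\<not> mb_maker_wins V W Ms Bs False"
proof
  note fork = assms[unfolded fork_def]
  assume "mb_maker_wins V W Ms Bs False"
  then show False
  proof cases
    case breaker_move
    then have "mb_maker_wins V W Ms (insert a Bs) True" using fork by blast
    moreover have "\<not> mb_maker_wins V W Ms (insert a Bs) True"
      by (rule maker_loses_against_two_threats[where b = b and c = c]) (use fork in auto)
    ultimately show False by contradiction
  qed (use fork in blast)+
qed

lemma maker_loses_if_every_move_leaves_fork:
  assumes "V - Ms - Bs \<noteq> {}"
    and "\<And>w. w \<in> V - Ms - Bs \<Longrightarrow> \<exists>a b c. fork W (V - Ms - Bs - {w}) a b c"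
  shows "\<not> mb_maker_wins V W Ms Bs True"
proof
  assume "mb_maker_wins V W Ms Bs True"
  then show False
  proof cases
    case (maker_move w)
    moreover obtain a b c where "fork W (V - insert w Ms - Bs) a b c"
      using assms(2)[OF maker_move(1)] by (metis Diff_insert Diff_insert2)
    ultimately show False using maker_loses_if_breaker_to_move_has_fork by metis
  qed (use assms(1) in blast)+
qed

lemma fork_avoiding:
  assumes "{a, b1, b2, b3} \<subseteq> F" "distinct [a, b1, b2, b3]" "w \<noteq> a"
    and "transversal W {a, b1}" "transversal W {a, b2}" "transversal W {a, b3}"
  shows "\<exists>b c. fork W (F - {w}) a b c"
proof -
  consider "w \<noteq> b1" "w \<noteq> b2" | "w = b1" | "w = b2" by blast
  then show ?thesis
  proof cases
    case 1
    then have "fork W (F - {w}) a b1 b2" using assms by (auto simp: fork_def)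
    then show ?thesis by blast
  next
    case 2
    then have "fork W (F - {w}) a b2 b3" using assms by (auto simp: fork_def)
    then show ?thesis by blast
  next
    case 3
    then have "fork W (F - {w}) a b1 b3" using assms by (auto simp: fork_def)
    then show ?thesis by blast
  qed
qed

lemma maker_wins_on_full_board:
  assumes "mb_maker_wins V W Ms Bs t" "V - Ms - Bs = {}"
  shows "mb_maker_wins V W Ms Bs t'"
  using assms by cases (auto intro: mb_maker_wins.finish)

text \<open>Whenever Maker would later claim \<open>z\<close>, he claims some other free vertex instead.\<close>
lemma maker_wins_insert:
  assumes "mono W" "mb_maker_wins V W Ms Bs t" "z \<in> V - Ms - Bs"
  shows "mb_maker_wins V W (insert z Ms) Bs t"
  using assms(2,3)
proof (induction arbitrary: z rule: mb_maker_wins.induct)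
  case (finish Ms Bs t)
  then show ?case by blast
next
  case (maker_move y Ms Bs)
  show ?case
  proof (cases "z = y")
    case True
    show ?thesis
    proof (cases "V - insert y Ms - Bs = {}")
      case True
      then show ?thesis
        using maker_move.hyps(2) \<open>z = y\<close> maker_wins_on_full_board by blast
    next
      case False
      then obtain z' where z': "z' \<in> V - insert y Ms - Bs" by blast
      then have "mb_maker_wins V W (insert z' (insert y Ms)) Bs False"
        by (rule maker_move.IH)
      then show ?thesis unfolding \<open>z = y\<close> by (rule mb_maker_wins.maker_move[OF z'])
    qed
  next
    case False
    then have "z \<in> V - insert y Ms - Bs" using maker_move.prems by blast
    then have "mb_maker_wins V W (insert y (insert z Ms)) Bs False"
      using maker_move.IH insert_commute by metis
    moreover have "y \<in> V - insert z Ms - Bs" using maker_move.hyps(1) False by blast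
    ultimately show ?thesis by (rule mb_maker_wins.maker_move[rotated])
  qed
next
  case (breaker_move Ms Bs)
  show ?case
  proof (cases "V - insert z Ms - Bs = {}")
    case True
    have "mb_maker_wins V W Ms (insert z Bs) True" using breaker_move.IH breaker_move.prems by blast
    moreover have "V - Ms - insert z Bs = {}" using True by blast
    ultimately have "W Ms" by cases blast+
    then have "W (insert z Ms)" using monoD[OF assms(1) subset_insertI] by (simp add: le_bool_def)
    with True show ?thesis by (rule mb_maker_wins.finish)
  next
    case False
    have "mb_maker_wins V W (insert z Ms) (insert x Bs) True" if "x \<in> V - insert z Ms - Bs" for x
    proof -
      have "x \<in> V - Ms - Bs" "z \<in> V - Ms - insert x Bs" using breaker_move.prems that by blast+
      then show ?thesis using breaker_move.IH by blast
    qed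
    with False show ?thesis by (intro mb_maker_wins.breaker_move) blast+
  qed
qed

lemma maker_wins_moving_first:
  assumes "mono W" "mb_maker_wins V W Ms Bs False"
  shows "mb_maker_wins V W Ms Bs True"
proof (cases "V - Ms - Bs = {}")
  case True
  then show ?thesis using assms(2) maker_wins_on_full_board by blast
next
  case False
  then obtain z where z: "z \<in> V - Ms - Bs" by blast
  show ?thesis by (rule mb_maker_wins.maker_move[OF z maker_wins_insert[OF assms z]])
qed

lemma mono_sr_win: "mono (sr_win V E)"
  unfolding mono_def sr_win_def le_bool_def by blast

lemma O_SR_neq_Out_P: "O_SR V E \<noteq> Out_P"
  using maker_wins_moving_first[OF mono_sr_win] unfolding O_SR_def Let_def by auto

lemma O_SR_eq_Out_B_iff:
  "O_SR V E = Out_B \<longleftrightarrow>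
     \<not> mb_maker_wins V (sr_win V E) {} {} True \<and> \<not> mb_maker_wins V (sr_win V E) {} {} False"
  unfolding O_SR_def Let_def by auto

lemma O_SR_in_Out_N_Out_B_iff:
  "O_SR V E \<in> {Out_N, Out_B} \<longleftrightarrow> \<not> mb_maker_wins V (sr_win V E) {} {} False"
  unfolding O_SR_def Let_def by auto

section \<open>Walks and distances\<close>

lemma walk_add: "walk E x y m \<Longrightarrow> walk E y z n \<Longrightarrow> walk E x z (m + n)"
  by (induction m arbitrary: x) auto

lemma walk_split: "walk E x z (m + n) \<Longrightarrow> \<exists>y. walk E x y m \<and> walk E y z n"
proof (induction m arbitrary: x)
  case (Suc m)
  then obtain w where "E x w" "walk E w z (m + n)" by auto
  with Suc.IH obtain y where "walk E w y m" "walk E y z n" by blast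
  with \<open>E x w\<close> show ?case by auto
qed simp

lemma walk_sym:
  assumes "symp E" "walk E x y n"
  shows "walk E y x n"
  using assms(2)
proof (induction n arbitrary: x)
  case (Suc n)
  then obtain z where "E x z" "walk E z y n" by auto
  then have "walk E y z n" "walk E z x 1" using Suc.IH assms(1) by (auto dest: sympD)
  then show ?case using walk_add by fastforce
qed simp

lemma gdist_le: "walk E x y n \<Longrightarrow> gdist E x y \<le> n"
  unfolding gdist_def by (rule Least_le)

lemma walk_gdist: "walk E x y n \<Longrightarrow> walk E x y (gdist E x y)"
  unfolding gdist_def by (rule LeastI)

lemma gdist_self: "gdist E x x = 0"
  using gdist_le[of E x x 0] by simp

lemma gdist_sym:
  assumes "symp E"
  shows "gdist E x y = gdist E y x"
proof -
  have "walk E x y = walk E y x" using walk_sym[OF assms] by blast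
  then show ?thesis by (simp add: gdist_def)
qed

lemma gdist_eq_0_iff: "walk E x y n \<Longrightarrow> gdist E x y = 0 \<longleftrightarrow> x = y"
  using walk_gdist[of E x y n] gdist_self[of E x] by auto

lemma geodesic_vertex_at_distance:
  assumes "walk E x y (gdist E x y)" "k \<le> gdist E x y"
  obtains p where "walk E x p k" "gdist E x p = k"
proof -
  obtain p where p: "walk E x p k" "walk E p y (gdist E x y - k)"
    using walk_split assms by (metis le_add_diff_inverse)
  have "gdist E x y \<le> gdist E x p + (gdist E x y - k)"
    using gdist_le[OF walk_add[OF walk_gdist[OF p(1)] p(2)]] .
  then have "gdist E x p = k" using gdist_le[OF p(1)] assms(2) by linarith
  with p(1) show ?thesis by (rule that)
qed

lemma gdist_gap_imp_nonadjacent: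
  assumes "walk E x p i" "i + 2 \<le> gdist E x q"
  shows "p \<noteq> q \<and> \<not> E p q"
proof -
  have "\<not> walk E x q (i + j)" if "j \<le> 1" for j
    using gdist_le assms(2) that by fastforce
  then show ?thesis using assms(1) walk_add[of E x p i q 1] by force
qed

lemma simple_graph_symp: "simple_graph V E \<Longrightarrow> symp E"
  unfolding simple_graph_def symp_def by blast

lemma walk_in_vertices: "simple_graph V E \<Longrightarrow> x \<in> V \<Longrightarrow> walk E x y n \<Longrightarrow> y \<in> V"
  by (induction n arbitrary: x) (auto simp: simple_graph_def)

lemma connected_walk_gdist:
  "connected_graph V E \<Longrightarrow> x \<in> V \<Longrightarrow> y \<in> V \<Longrightarrow> walk E x y (gdist E x y)"
  unfolding connected_graph_def using walk_gdist by metis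

lemma connected_vertex_at_distance:
  assumes "connected_graph V E" "x \<in> V" "y \<in> V" "k \<le> gdist E x y"
  obtains p where "p \<in> V" "walk E x p k" "gdist E x p = k"
proof -
  obtain p where "walk E x p k" "gdist E x p = k"
    using geodesic_vertex_at_distance connected_walk_gdist assms by metis
  moreover have "p \<in> V"
    using walk_in_vertices[OF _ assms(2) \<open>walk E x p k\<close>] assms(1)
    by (simp add: connected_graph_def)
  ultimately show ?thesis using that by blast
qed

lemma gdist_image_eq: "{gdist E x y | x y. x \<in> V \<and> y \<in> V} = (\<lambda>(x, y). gdist E x y) ` (V \<times> V)"
  by auto

lemma gdist_le_diam: "finite V \<Longrightarrow> x \<in> V \<Longrightarrow> y \<in> V \<Longrightarrow> gdist E x y \<le> diam V E"
  unfolding diam_def gdist_image_eq by (rule Max_ge) auto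

lemma diam_attained:
  assumes "finite V" "V \<noteq> {}"
  obtains x y where "x \<in> V" "y \<in> V" "gdist E x y = diam V E"
proof -
  have "diam V E \<in> (\<lambda>(x, y). gdist E x y) ` (V \<times> V)"
    unfolding diam_def gdist_image_eq using assms by (intro Max_in) auto
  then show ?thesis using that by auto
qed

lemma complete_if_diam_le_1:
  assumes conn: "connected_graph V E" and "diam V E \<le> 1" "u \<in> V" "v \<in> V" "u \<noteq> v"
  shows "E u v"
proof -
  have "finite V" using conn by (simp add: connected_graph_def simple_graph_def)
  then have "gdist E u v \<le> 1" using gdist_le_diam assms(2-4) by (metis order_trans)
  moreover have w: "walk E u v (gdist E u v)" using connected_walk_gdist[OF conn assms(3,4)] .
  moreover have "gdist E u v \<noteq> 0" using gdist_eq_0_iff[OF w] assms(5) by blast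
  ultimately have "walk E u v 1" by (metis le_neq_implies_less less_one)
  then show ?thesis by simp
qed

section \<open>Strong resolving sets in the corona\<close>

text \<open>A vertex resolving \<open>x\<close> and \<open>y\<close> strongly would lie beyond one of them on a geodesic,
  at distance larger than the maximum.\<close>
lemma transversal_sr_win_max_gdist:
  assumes conn: "connected_graph V E" and "x \<in> V" "y \<in> V" "x \<noteq> y"
    and max: "\<And>u v. u \<in> V \<Longrightarrow> v \<in> V \<Longrightarrow> gdist E u v \<le> gdist E x y"
  shows "transversal (sr_win V E) {x, y}"
  unfolding transversal_def sr_win_def
proof (intro allI impI)
  fix M assume "\<exists>S\<subseteq>M. strong_resolving V E S"
  then obtain S where S: "S \<subseteq> M" "strong_resolving V E S" by blast
  have sym: "symp E" using conn simple_graph_symp unfolding connected_graph_def by blast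
  have end_point: "z = p" if "{p, q} = {x, y}" "z \<in> V" "on_geodesic E q p z" for p q z
  proof -
    have "p \<in> V" "q \<in> V" "gdist E q p = gdist E x y"
      using that(1) assms(2,3) gdist_sym[OF sym, of x y] by (auto simp: doubleton_eq_iff)
    then have "gdist E p z = 0"
      using that(3) max[of q z] \<open>z \<in> V\<close> unfolding on_geodesic_def by linarith
    then show "z = p" using gdist_eq_0_iff connected_walk_gdist[OF conn \<open>p \<in> V\<close> \<open>z \<in> V\<close>] by metis
  qed
  obtain z where "z \<in> S" "on_geodesic E y x z \<or> on_geodesic E x y z"
    using S(2) assms(2-4) unfolding strong_resolving_def by blast
  moreover have "z \<in> V" using S(2) \<open>z \<in> S\<close> unfolding strong_resolving_def by blast
  ultimately have "z \<in> S \<inter> {x, y}" using end_point[of x y] end_point[of y x] by auto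
  then show "M \<inter> {x, y} \<noteq> {}" using S(1) by blast
qed

lemma transversal_sr_win_complete:
  assumes conn: "connected_graph V E"
    and complete: "\<And>u v. u \<in> V \<Longrightarrow> v \<in> V \<Longrightarrow> u \<noteq> v \<Longrightarrow> E u v"
    and "a \<in> V" "b \<in> V" "a \<noteq> b"
  shows "transversal (sr_win V E) {a, b}"
proof (rule transversal_sr_win_max_gdist[OF conn assms(3-5)])
  fix u v assume "u \<in> V" "v \<in> V"
  then have "gdist E u v \<le> 1" using complete gdist_le[of E u v 1] gdist_le[of E u u 0] by force
  moreover have "gdist E a b \<noteq> 0"
    using gdist_eq_0_iff connected_walk_gdist[OF conn assms(3,4)] assms(5) by metis
  ultimately show "gdist E u v \<le> gdist E a b" by linarith
qed

lemma simple_graph_corona: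
  assumes "simple_graph V E"
  shows "simple_graph (corona_V V) (corona_E V E)"
proof -
  have "a \<in> corona_V V \<and> b \<in> corona_V V \<and> a \<noteq> b \<and> corona_E V E b a" if "corona_E V E a b" for a b
    using that assms by (cases a; cases b) (auto simp: simple_graph_def corona_V_def)
  then show ?thesis using assms by (simp add: simple_graph_def corona_V_def)
qed

lemma corona_walk_le_2:
  assumes "a \<in> corona_V V" "b \<in> corona_V V"
  shows "\<exists>n \<le> 2. walk (corona_E V E) a b n"
proof -
  define m n :: nat where "m = (if a = None then 0 else 1)" and "n = (if b = None then 0 else 1)"
  have "walk (corona_E V E) a None m"
    using assms(1) unfolding m_def by (cases a) (auto simp: corona_V_def)
  moreover have "walk (corona_E V E) None b n"
    using assms(2) unfolding n_def by (cases b) (auto simp: corona_V_def)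
  ultimately have "walk (corona_E V E) a b (m + n)" by (rule walk_add)
  moreover have "m + n \<le> 2" unfolding m_def n_def by simp
  ultimately show ?thesis by blast
qed

lemma gdist_corona_le_2: "a \<in> corona_V V \<Longrightarrow> b \<in> corona_V V \<Longrightarrow> gdist (corona_E V E) a b \<le> 2"
  using corona_walk_le_2 gdist_le order_trans by metis

lemma connected_graph_corona: "simple_graph V E \<Longrightarrow> connected_graph (corona_V V) (corona_E V E)"
  unfolding connected_graph_def using simple_graph_corona corona_walk_le_2
  by (metis corona_V_def insert_not_empty)

lemma gdist_corona_nonadjacent:
  assumes "u \<in> V" "v \<in> V" "u \<noteq> v" "\<not> E u v"
  shows "gdist (corona_E V E) (Some u) (Some v) = 2"
  unfolding gdist_def
proof (rule Least_equality)
  show "walk (corona_E V E) (Some u) (Some v) 2"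
    using assms(1,2) by (auto simp: numeral_2_eq_2 intro: exI[of _ None])
  show "2 \<le> n" if "walk (corona_E V E) (Some u) (Some v) n" for n
  proof (rule ccontr)
    assume "\<not> 2 \<le> n"
    then consider "n = 0" | "n = Suc 0" by linarith
    then show False using that assms(3,4) by cases auto
  qed
qed

lemma transversal_corona_nonadjacent:
  assumes "simple_graph V E" "u \<in> V" "v \<in> V" "u \<noteq> v" "\<not> E u v"
  shows "transversal (sr_win (corona_V V) (corona_E V E)) {Some u, Some v}"
proof (rule transversal_sr_win_max_gdist[OF connected_graph_corona[OF assms(1)]])
  show "Some u \<in> corona_V V" "Some v \<in> corona_V V" "Some u \<noteq> Some v"
    using assms(2-4) by (auto simp: corona_V_def)
  show "gdist (corona_E V E) a b \<le> gdist (corona_E V E) (Some u) (Some v)"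
    if "a \<in> corona_V V" "b \<in> corona_V V" for a b
    using gdist_corona_le_2[OF that] gdist_corona_nonadjacent[of u V v E, OF assms(2-5)] by simp
qed

lemma transversal_corona_far:
  assumes "simple_graph V E" "p \<in> V" "q \<in> V" "walk E x p i" "i + 2 \<le> gdist E x q"
  shows "transversal (sr_win (corona_V V) (corona_E V E)) {Some p, Some q}"
  using gdist_gap_imp_nonadjacent[OF assms(4,5)]
  by (intro transversal_corona_nonadjacent[OF assms(1-3)]) auto

lemma O_SR_corona_complete:
  assumes sg: "simple_graph V E" and "card V \<ge> 3"
    and complete: "\<And>u v. u \<in> V \<Longrightarrow> v \<in> V \<Longrightarrow> u \<noteq> v \<Longrightarrow> E u v"
  shows "O_SR (corona_V V) (corona_E V E) = Out_B"
proof -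
  let ?V = "corona_V V" and ?W = "sr_win (corona_V V) (corona_E V E)"
  obtain U where "U \<subseteq> V" "card U = 3" using assms(2) obtain_subset_with_card_n by metis
  then obtain u1 u2 u3 where "{u1, u2, u3} \<subseteq> V" "distinct [u1, u2, u3]"
    by (auto simp: card_3_iff)
  then have F: "{None, Some u1, Some u2, Some u3} \<subseteq> ?V" "distinct [None, Some u1, Some u2, Some u3]"
    by (auto simp: corona_V_def)
  have "corona_E V E a b" if "a \<in> ?V" "b \<in> ?V" "a \<noteq> b" for a b
    using that complete by (cases a; cases b) (auto simp: corona_V_def)
  then have T: "transversal ?W {a, b}" if "a \<in> ?V" "b \<in> ?V" "a \<noteq> b" for a b
    using transversal_sr_win_complete[OF connected_graph_corona[OF sg]] that by blast
  have "\<not> mb_maker_wins ?V ?W {} {} True"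
  proof (rule maker_loses_if_every_move_leaves_fork)
    show "?V - {} - {} \<noteq> {}" by (simp add: corona_V_def)
    fix w
    show "\<exists>a b c. fork ?W (?V - {} - {} - {w}) a b c"
    proof (cases "w = None")
      case True
      have "\<exists>b c. fork ?W (?V - {w}) (Some u1) b c"
        by (rule fork_avoiding[of "Some u1" None "Some u2" "Some u3"])
          (use F T True in auto)
      then show ?thesis by (simp only: Diff_empty) blast
    next
      case False
      have "\<exists>b c. fork ?W (?V - {w}) None b c"
        by (rule fork_avoiding[of None "Some u1" "Some u2" "Some u3"])
          (use F T False in auto)
      then show ?thesis by (simp only: Diff_empty) blast
    qed
  qed
  moreover have "fork ?W (?V - {} - {}) None (Some u1) (Some u2)"
    using F T unfolding fork_def by auto
  then have "\<not> mb_maker_wins ?V ?W {} {} False"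
    by (rule maker_loses_if_breaker_to_move_has_fork)
  ultimately show ?thesis by (simp add: O_SR_eq_Out_B_iff)
qed

lemma corona_breaker_wins_B_game_if_diam_ge_3:
  assumes conn: "connected_graph V E" and "3 \<le> diam V E"
  shows "\<not> mb_maker_wins (corona_V V) (sr_win (corona_V V) (corona_E V E)) {} {} False"
proof -
  let ?V = "corona_V V" and ?W = "sr_win (corona_V V) (corona_E V E)"
  have sg: "simple_graph V E" and fin: "finite V" and ne: "V \<noteq> {}"
    using conn by (auto simp: connected_graph_def simple_graph_def)
  obtain x y where xy: "x \<in> V" "y \<in> V" "gdist E x y = diam V E"
    by (rule diam_attained[OF fin ne])
  obtain p2 where p2: "p2 \<in> V" "walk E x p2 2" "gdist E x p2 = 2"
    using connected_vertex_at_distance[OF conn xy(1,2), of 2] xy(3) assms(2) by auto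
  obtain p3 where p3: "p3 \<in> V" "walk E x p3 3" "gdist E x p3 = 3"
    using connected_vertex_at_distance[OF conn xy(1,2), of 3] xy(3) assms(2) by auto
  have "transversal ?W {Some x, Some p2}" "transversal ?W {Some x, Some p3}"
    using transversal_corona_far[OF sg xy(1), of _ x 0] p2 p3 by simp_all
  moreover have "{Some x, Some p2, Some p3} \<subseteq> ?V" "distinct [Some x, Some p2, Some p3]"
    using xy(1) p2 p3 gdist_self[of E x] by (auto simp: corona_V_def)
  ultimately have "fork ?W (?V - {} - {}) (Some x) (Some p2) (Some p3)"
    unfolding fork_def by simp
  then show ?thesis by (rule maker_loses_if_breaker_to_move_has_fork)
qed

text \<open>Maker's first move can spoil the forks at \<open>x\<close> only by taking \<open>x\<close> itself, and then the
  far end \<open>p\<^sub>4\<close> of a geodesic from \<open>x\<close> provides another fork.\<close>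
lemma corona_breaker_wins_M_game_if_diam_ge_4:
  assumes conn: "connected_graph V E" and "4 \<le> diam V E"
  shows "\<not> mb_maker_wins (corona_V V) (sr_win (corona_V V) (corona_E V E)) {} {} True"
proof -
  let ?V = "corona_V V" and ?W = "sr_win (corona_V V) (corona_E V E)"
  have sg: "simple_graph V E" and fin: "finite V" and ne: "V \<noteq> {}"
    using conn by (auto simp: connected_graph_def simple_graph_def)
  obtain x y where xy: "x \<in> V" "y \<in> V" "gdist E x y = diam V E"
    by (rule diam_attained[OF fin ne])
  have at_distance: "\<exists>p. p \<in> V \<and> walk E x p k \<and> gdist E x p = k" if "k \<le> 4" for k
  proof -
    have "k \<le> gdist E x y" using that assms(2) xy(3) by linarith
    then obtain p where "p \<in> V" "walk E x p k" "gdist E x p = k"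
      by (rule connected_vertex_at_distance[OF conn xy(1,2)])
    then show ?thesis by blast
  qed
  obtain p1 where p1: "p1 \<in> V" "walk E x p1 1" "gdist E x p1 = 1" using at_distance[of 1] by auto
  obtain p2 where p2: "p2 \<in> V" "walk E x p2 2" "gdist E x p2 = 2" using at_distance[of 2] by auto
  obtain p3 where p3: "p3 \<in> V" "walk E x p3 3" "gdist E x p3 = 3" using at_distance[of 3] by auto
  obtain p4 where p4: "p4 \<in> V" "walk E x p4 4" "gdist E x p4 = 4" using at_distance[of 4] by auto
  have in_V: "{Some x, Some p1, Some p2, Some p3, Some p4} \<subseteq> ?V"
    using xy(1) p1 p2 p3 p4 by (auto simp: corona_V_def)
  have distinct: "distinct [Some x, Some p1, Some p2, Some p3, Some p4]"
    using p1 p2 p3 p4 gdist_self[of E x] by auto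
  have T_x: "transversal ?W {Some x, Some p}" if "p \<in> {p2, p3, p4}" for p
  proof (rule transversal_corona_far[OF sg xy(1)])
    show "walk E x x 0" by simp
    show "p \<in> V" "0 + 2 \<le> gdist E x p" using that p2 p3 p4 by auto
  qed
  have "transversal ?W {Some p1, Some p4}" "transversal ?W {Some p2, Some p4}"
    using transversal_corona_far[OF sg p1(1) p4(1) p1(2)]
      transversal_corona_far[OF sg p2(1) p4(1) p2(2)] p4(3) by simp_all
  then have T_p4: "transversal ?W {Some p4, Some p1}" "transversal ?W {Some p4, Some p2}"
    by (simp_all add: insert_commute)
  show ?thesis
  proof (rule maker_loses_if_every_move_leaves_fork)
    show "?V - {} - {} \<noteq> {}" by (simp add: corona_V_def)
    fix w
    show "\<exists>a b c. fork ?W (?V - {} - {} - {w}) a b c"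
    proof (cases "w = Some x")
      case True
      have "fork ?W (?V - {w}) (Some p4) (Some p1) (Some p2)"
        unfolding fork_def using True in_V distinct T_p4 by auto
      then show ?thesis by (simp only: Diff_empty) blast
    next
      case False
      have "\<exists>b c. fork ?W (?V - {w}) (Some x) b c"
        by (rule fork_avoiding[of "Some x" "Some p2" "Some p3" "Some p4"])
          (use False in_V distinct T_x in auto)
      then show ?thesis by (simp only: Diff_empty) blast
    qed
  qed
qed

theorem mainTheorem12:
  fixes V :: "'a set" and E :: "'a \<Rightarrow> 'a \<Rightarrow> bool"
  assumes "connected_graph V E" and "card V \<ge> 3"
  shows "(diam V E = 1 \<longrightarrow> O_SR (corona_V V) (corona_E V E) = Out_B)
       \<and> (diam V E = 2 \<longrightarrow> O_SR (corona_V V) (corona_E V E) \<in> {Out_M, Out_N, Out_B})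
       \<and> (diam V E = 3 \<longrightarrow> O_SR (corona_V V) (corona_E V E) \<in> {Out_N, Out_B})
       \<and> (diam V E \<ge> 4 \<longrightarrow> O_SR (corona_V V) (corona_E V E) = Out_B)"
proof -
  let ?O = "O_SR (corona_V V) (corona_E V E)"
  have "simple_graph V E" using assms(1) by (simp add: connected_graph_def)
  then have "diam V E = 1 \<Longrightarrow> ?O = Out_B"
    using O_SR_corona_complete[OF _ assms(2)] complete_if_diam_le_1[OF assms(1)] by simp
  moreover have "?O \<noteq> Out_P" by (rule O_SR_neq_Out_P)
  moreover have "3 \<le> diam V E \<Longrightarrow> ?O \<in> {Out_N, Out_B}"
    using corona_breaker_wins_B_game_if_diam_ge_3[OF assms(1)] O_SR_in_Out_N_Out_B_iff by blast
  moreover have "4 \<le> diam V E \<Longrightarrow> ?O = Out_B"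
    using corona_breaker_wins_B_game_if_diam_ge_3[OF assms(1)]
      corona_breaker_wins_M_game_if_diam_ge_4[OF assms(1)] by (simp add: O_SR_eq_Out_B_iff)
  ultimately show ?thesis by (cases ?O) auto
qed

end
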